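(* Let $(\Sigma,E)$ be an algebraic theory with free monad $T$, and let $(X,I)$ be a $(\Sigma^{\mathrm{s}},E^{\mathrm{s}})$-algebra. Then the assignment $\alpha:TX\to X$, $\alpha(\overline{t})=I(t)_{I(\mathsf{a})}$ for $\Sigma$-terms $t$ over $X$, is a well-defined function, i.e. $I(t)_{I(\mathsf{a})}=I(s)_{I(\mathsf{a})}$ whenever $\overline{t}=\overline{s}$ in $TX$.
   Context: $T=T_{\Sigma,E}$: $TX$ is the set of $\Sigma$-terms over $X$ modulo the smallest congruence containing all substitution instances of $E$; $\overline{t}$ denotes the class of $t$. For a $\Sigma^{\mathrm{s}}$-algebra $(X,I)$ and a function $f:X\to X$, $I(t)_f$ is the value of the $\Sigma$-term $t$ over $X$ obtained by sending each element $x$ occurring as a variable to $f(x)$ and interpreting operations via $I$; here $f=I(\mathsf{a})$. The theory $(\Sigma^{\mathrm{s}},E^{\mathrm{s}})$: $\Sigma^{\mathrm{s}}=\Sigma\uplus\{\mathsf{a}:1\}$ and $E^{\mathrm{s}}$ consists of $\mathsf{a}\mathsf{a}v_1=\mathsf{a}v_1$; $\mathsf{a}(\mathsf{op}(v_1,\dots,v_n))=\mathsf{op}(v_1,\dots,v_n)$ and $\mathsf{op}(\mathsf{a}v_1,\dots,\mathsf{a}v_n)=\mathsf{op}(v_1,\dots,v_n)$ for every $(\mathsf{op}:n)\in\Sigma$; and $t(\mathsf{a}v_1,\dots,\mathsf{a}v_n)=s(\mathsf{a}v_1,\dots,\mathsf{a}v_n)$ for every equation $t(v_1,\dots,v_n)=s(v_1,\dots,v_n)$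 in $E$. *)

theory Defs
  imports Main
begin

datatype ('o, 'v) trm = Var 'v | Op 'o "('o, 'v) trm list"

fun wf_trm :: "('o \<Rightarrow> nat) \<Rightarrow> 'v set \<Rightarrow> ('o, 'v) trm \<Rightarrow> bool" where
  "wf_trm ar V (Var v) = (v \<in> V)"
| "wf_trm ar V (Op f ts) = (length ts = ar f \<and> (\<forall>t\<in>set ts. wf_trm ar V t))"

fun subst :: "('v \<Rightarrow> ('o, 'w) trm) \<Rightarrow> ('o, 'v) trm \<Rightarrow> ('o, 'w) trm" where
  "subst \<sigma> (Var v) = \<sigma> v"
| "subst \<sigma> (Op f ts) = Op f (map (subst \<sigma>) ts)"

fun eval :: "('o \<Rightarrow> 'x list \<Rightarrow> 'x) \<Rightarrow> ('v \<Rightarrow> 'x) \<Rightarrow> ('o, 'v) trm \<Rightarrow> 'x" where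
  "eval J \<rho> (Var v) = \<rho> v"
| "eval J \<rho> (Op f ts) = J f (map (eval J \<rho>) ts)"

definition algebraic_theory :: "('o \<Rightarrow> nat) \<Rightarrow> (('o, nat) trm \<times> ('o, nat) trm) set \<Rightarrow> bool" where
  "algebraic_theory ar E \<longleftrightarrow> (\<forall>(l, r) \<in> E. wf_trm ar UNIV l \<and> wf_trm ar UNIV r)"

text \<open>The smallest congruence on \<Sigma>-terms over X containing all substitution instances of E;
  T X is the quotient by this relation.\<close>
inductive eqv :: "('o \<Rightarrow> nat) \<Rightarrow> (('o, nat) trm \<times> ('o, nat) trm) set \<Rightarrow> 'x set
    \<Rightarrow> ('o, 'x) trm \<Rightarrow> ('o, 'x) trm \<Rightarrow> bool"
  for ar E X where
  inst: "(l, r) \<in> E \<Longrightarrow> (\<forall>v. wf_trm ar X (\<sigma> v)) \<Longrightarrow> eqv ar E X (subst \<sigma> l) (subst \<sigma> r)"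
| refl: "wf_trm ar X t \<Longrightarrow> eqv ar E X t t"
| sym: "eqv ar E X t s \<Longrightarrow> eqv ar E X s t"
| trans: "eqv ar E X t s \<Longrightarrow> eqv ar E X s u \<Longrightarrow> eqv ar E X t u"
| cong: "length ts = ar f \<Longrightarrow> list_all2 (eqv ar E X) ts us \<Longrightarrow> eqv ar E X (Op f ts) (Op f us)"

text \<open>The signature \<Sigma>^s = \<Sigma> + {a : 1}: operation None is the new unary symbol a,
  Some f is the old symbol f.\<close>
definition ar_s :: "('o \<Rightarrow> nat) \<Rightarrow> 'o option \<Rightarrow> nat" where
  "ar_s ar = (\<lambda>g. case g of None \<Rightarrow> 1 | Some f \<Rightarrow> ar f)"

fun lift :: "('o, 'v) trm \<Rightarrow> ('o option, 'v) trm" where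
  "lift (Var v) = Var v"
| "lift (Op f ts) = Op (Some f) (map lift ts)"

definition A :: "('o option, 'v) trm \<Rightarrow> ('o option, 'v) trm" where
  "A t = Op None [t]"

definition Es :: "('o \<Rightarrow> nat) \<Rightarrow> (('o, nat) trm \<times> ('o, nat) trm) set
    \<Rightarrow> (('o option, nat) trm \<times> ('o option, nat) trm) set" where
  "Es ar E =
     {(A (A (Var 0)), A (Var 0))}
   \<union> {(A (Op (Some f) (map Var [0..<ar f])), Op (Some f) (map Var [0..<ar f])) | f. True}
   \<union> {(Op (Some f) (map (\<lambda>v. A (Var v)) [0..<ar f]), Op (Some f) (map Var [0..<ar f])) | f. True}
   \<union> {(subst (\<lambda>v. A (Var v)) (lift l), subst (\<lambda>v. A (Var v)) (lift r)) | l r. (l, r) \<in> E}"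

definition is_algebra :: "('o \<Rightarrow> nat) \<Rightarrow> 'x set \<Rightarrow> ('o \<Rightarrow> 'x list \<Rightarrow> 'x) \<Rightarrow> bool" where
  "is_algebra ar X I \<longleftrightarrow> (\<forall>f xs. length xs = ar f \<and> set xs \<subseteq> X \<longrightarrow> I f xs \<in> X)"

definition satisfies :: "'x set \<Rightarrow> ('o \<Rightarrow> 'x list \<Rightarrow> 'x) \<Rightarrow> (('o, 'v) trm \<times> ('o, 'v) trm) set \<Rightarrow> bool" where
  "satisfies X I Eqs \<longleftrightarrow>
     (\<forall>(l, r) \<in> Eqs. \<forall>\<rho>. (\<forall>v. \<rho> v \<in> X) \<longrightarrow> eval I \<rho> l = eval I \<rho> r)"

end

theory Submission
  imports Defs
begin

text \<open>Write \<open>a = I None\<close> and \<open>\<alpha>\<close> for evaluation of \<Sigma>-terms under the valuation \<open>a\<close>. The axioms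
  \<open>a a v = a v\<close> and \<open>a (op vs) = op vs\<close> make every value of \<open>\<alpha>\<close> a fixed point of \<open>a\<close>. Hence
  \<open>\<alpha> (l\<sigma>)\<close> is the value of \<open>l\<close> under the valuation \<open>v \<mapsto> a (\<alpha> (\<sigma> v))\<close>, and the lifted axiom
  \<open>l(a v1, \<dots>) = r(a v1, \<dots>)\<close> of E^s equates it with \<open>\<alpha> (r\<sigma>)\<close>.\<close>

lemma eval_subst: "eval J \<rho> (subst \<sigma> t) = eval J (\<lambda>v. eval J \<rho> (\<sigma> v)) t"
  by (induction t) (auto intro!: map_cong arg_cong[where f="J _"])

lemma eval_subst_A_lift:
  "eval I \<rho> (subst (\<lambda>v. A (Var v)) (lift t)) = eval (\<lambda>f. I (Some f)) (\<lambda>v. I None [\<rho> v]) t"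
  by (induction t) (auto simp: A_def intro!: map_cong arg_cong[where f="I _"])

lemma satisfiesD:
  assumes "satisfies X I Eqs" and "(l, r) \<in> Eqs" and "\<And>v. \<rho> v \<in> X"
  shows "eval I \<rho> l = eval I \<rho> r"
  using assms unfolding satisfies_def by blast

lemma eval_in_carrier:
  assumes "is_algebra ar X J" and "\<And>v. v \<in> V \<Longrightarrow> \<rho> v \<in> X" and "wf_trm ar V t"
  shows "eval J \<rho> t \<in> X"
  using assms(3)
proof (induction t)
  case (Op f ts)
  then have "length (map (eval J \<rho>) ts) = ar f" and "set (map (eval J \<rho>) ts) \<subseteq> X" by auto
  with assms(1) show ?case by (simp add: is_algebra_def)
qed (simp add: assms(2))

lemma is_algebra_s_None:
  assumes "is_algebra (ar_s ar) X I" and "x \<in> X"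
  shows "I None [x] \<in> X"
  using assms by (auto simp: is_algebra_def ar_s_def)

lemma is_algebra_s_Some:
  assumes "is_algebra (ar_s ar) X I"
  shows "is_algebra ar X (\<lambda>f. I (Some f))"
  using assms by (auto simp: is_algebra_def ar_s_def)

lemma eval_A_in_carrier:
  assumes "is_algebra (ar_s ar) X I" and "wf_trm ar X t"
  shows "eval (\<lambda>f. I (Some f)) (\<lambda>x. I None [x]) t \<in> X"
  using eval_in_carrier[OF is_algebra_s_Some] is_algebra_s_None assms by metis

context
  fixes ar :: "'o \<Rightarrow> nat" and E :: "(('o, nat) trm \<times> ('o, nat) trm) set"
    and X :: "'x set" and I :: "'o option \<Rightarrow> 'x list \<Rightarrow> 'x"
  assumes sat: "satisfies X I (Es ar E)"
begin

lemma satisfies_Es_A_idem: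
  assumes "x \<in> X"
  shows "I None [I None [x]] = I None [x]"
proof -
  have "(A (A (Var 0)), A (Var 0)) \<in> Es ar E" unfolding Es_def by blast
  from satisfiesD[OF sat this, of "\<lambda>_. x"] assms show ?thesis by (simp add: A_def)
qed

lemma satisfies_Es_A_Op:
  assumes alg: "is_algebra (ar_s ar) X I" and len: "length xs = ar f" and xs: "set xs \<subseteq> X"
  shows "I None [I (Some f) xs] = I (Some f) xs"
proof -
  define \<rho> where "\<rho> v = (if v < ar f then xs ! v else I (Some f) xs)" for v
  \<comment> \<open>outside the arity any element of X will do; this one exists even when \<open>ar f = 0\<close>\<close>
  have \<rho>_carrier: "\<rho> v \<in> X" for v
    using is_algebra_s_Some[OF alg] len xs by (auto simp: \<rho>_def is_algebra_def)
  have \<rho>_args: "map \<rho> [0..<ar f] = xs"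
    using len by (auto simp: \<rho>_def intro: nth_equalityI)
  have "(A (Op (Some f) (map Var [0..<ar f])), Op (Some f) (map Var [0..<ar f])) \<in> Es ar E"
    unfolding Es_def by blast
  from satisfiesD[where \<rho> = \<rho>, OF sat this \<rho>_carrier] show ?thesis
    using \<rho>_args by (simp add: A_def comp_def)
qed

lemma satisfies_Es_lift:
  assumes "(l, r) \<in> E" and "\<And>v. \<rho> v \<in> X"
  shows "eval (\<lambda>f. I (Some f)) (\<lambda>v. I None [\<rho> v]) l = eval (\<lambda>f. I (Some f)) (\<lambda>v. I None [\<rho> v]) r"
proof -
  have "(subst (\<lambda>v. A (Var v)) (lift l), subst (\<lambda>v. A (Var v)) (lift r)) \<in> Es ar E"
    using assms(1) unfolding Es_def by blast
  from satisfiesD[where \<rho> = \<rho>, OF sat this assms(2)] show ?thesis by (simp add: eval_subst_A_lift)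
qed

lemma A_eval_fixed:
  assumes alg: "is_algebra (ar_s ar) X I" and "wf_trm ar X t"
  shows "I None [eval (\<lambda>f. I (Some f)) (\<lambda>x. I None [x]) t] = eval (\<lambda>f. I (Some f)) (\<lambda>x. I None [x]) t"
  using assms(2)
proof (induction t)
  case (Var x)
  then show ?case using is_algebra_s_None[OF alg] satisfies_Es_A_idem by simp
next
  case (Op f ts)
  let ?xs = "map (eval (\<lambda>f. I (Some f)) (\<lambda>x. I None [x])) ts"
  have "length ?xs = ar f" using Op.prems by simp
  moreover have "set ?xs \<subseteq> X"
    using Op.prems eval_A_in_carrier[OF alg] by auto
  ultimately show ?case using satisfies_Es_A_Op[OF alg] by simp
qed

end

theorem lemma12:
  fixes ar :: "'o \<Rightarrow> nat" and E :: "(('o, nat) trm \<times> ('o, nat) trm) set"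
    and X :: "'x set" and I :: "'o option \<Rightarrow> 'x list \<Rightarrow> 'x"
    and t s :: "('o, 'x) trm"
  assumes "algebraic_theory ar E"
    and "is_algebra (ar_s ar) X I"
    and "satisfies X I (Es ar E)"
    and "eqv ar E X t s"
  shows "eval (\<lambda>f. I (Some f)) (\<lambda>x. I None [x]) t = eval (\<lambda>f. I (Some f)) (\<lambda>x. I None [x]) s"
  using assms(4)
proof (induction rule: eqv.induct)
  case (inst l r \<sigma>)
  let ?\<alpha> = "eval (\<lambda>f. I (Some f)) (\<lambda>x. I None [x])"
  have carrier: "?\<alpha> (\<sigma> v) \<in> X" for v
    using eval_A_in_carrier[OF assms(2)] inst.hyps(2) by blast
  have fixed: "I None [?\<alpha> (\<sigma> v)] = ?\<alpha> (\<sigma> v)" for v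
    using A_eval_fixed[OF assms(3,2)] inst.hyps(2) by blast
  from satisfies_Es_lift[OF assms(3) inst.hyps(1), of "\<lambda>v. ?\<alpha> (\<sigma> v)"] carrier fixed
  show ?case by (simp add: eval_subst)
next
  case (cong ts f us)
  from cong.IH have "map (eval (\<lambda>f. I (Some f)) (\<lambda>x. I None [x])) ts
      = map (eval (\<lambda>f. I (Some f)) (\<lambda>x. I None [x])) us"
    by (induction ts us rule: list_all2_induct) auto
  then show ?case by simp
qed auto

end
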